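(* In any run $R$ of algorithm $\mathcal{A}_{\mathrm{reg}}$, for all $op, op' \in C(R)$: if $op \rightarrow op'$ then $op \prec op'$.
   Context: $op \rightarrow op'$ means the response event of $op$ occurs before the invocation event of $op'$ in the history of $R$. System model: $n$ asynchronous, crash-prone processes with identities in $\{1,\ldots,n\}$. Each process $k$ is the unique writer of a reliable linearizable single-writer multi-reader Distributed Ledger Object (DLO) $L_k$, readable by all processes; its state is a finite sequence of records, initially empty, with operations $L_k.get()$ (returns the current sequence) and $L_k.append(r)$ (appends record $r$); every invocation by a correct process completes. Well-formedness: a process does not invoke $\mathrm{apply}$ before its previous invocation has finished. Validated object: given a predicate $\mathrm{valid}(\langle P,\prec\rangle, op, i)$ and a function $\mathrm{execute}(\langle P,\prec\rangle, op, i)$, whose first argument is a strictly partially ordered set of operations, $op$ an operation and $i$ its issuing process. Clients use $\mathrm{apply}(op,i)$, returning $(\mathit{ACK}, r)$ if $op$ is found valid and executed with result $r$, and $(\mathit{NACK},-)$ otherwise. The history of a run $R$ contains only operations for which $\mathrm{apply}$ returns $\mathit{ACK}$; $C(R)$ is the set of complete such operations. Algorithm $\mathcal{A}_{\mathrm{reg}}$ (code of $\mathrm{apply}(op,i)$ at process $i$): for $j=1,\ldots,n$ in order, set $G_j \leftarrow L_j.get()$, $T_j \leftarrow |G_j|$; set $ts \leftarrow (i,T_1,\ldots,T_n)$; set $P \leftarrow \{op' : \langle ts',op'\rangle \in \bigcup_j G_j\}$; if $\mathrm{valid}(\langle P,\prec\rangle, op, i)$ then $res \leftarrow \mathrm{execute}(\langle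 P,\prec\rangle, op,i)$, $L_i.append(\langle ts, op\rangle)$, return $(\mathit{ACK},res)$; otherwise return $(\mathit{NACK},-)$. The invocation event of a valid operation is the invocation of $L_1.get()$, its response event the completion of $L_i.append(\langle ts,op\rangle)$. $ts$ is the timestamp $ts(op)$. Order $\prec$: for $op,op' \in C(R)$ with $ts(op)=(i,T_1,\ldots,T_n)$, $ts(op')=(k,T'_1,\ldots,T'_n)$, $op \prec op'$ iff $T_i < T'_i$. *)

theory Defs
  imports Main
begin

text \<open>The linearizable ledgers
  L_1..L_n are modelled as atomic objects (each get/append is a single atomic step);
  a run is an infinite interleaving of atomic steps of processes (with stuttering steps,
  which models asynchrony and crashes: a crashed process simply takes no more steps).\<close>

type_synonym tstamp = "nat \<times> nat list"     \<comment> \<open>(i, [T_1, ..., T_n])\<close>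
type_synonym 'op recd = "tstamp \<times> 'op"

text \<open>Component T_j (1-based) of a timestamp vector.\<close>
definition comp :: "nat list \<Rightarrow> nat \<Rightarrow> nat" where
  "comp T j = T ! (j - 1)"

fun ts_prec :: "tstamp \<Rightarrow> tstamp \<Rightarrow> bool" where
  "ts_prec (i, T) (k, T') = (comp T i < comp T' i)"

definition prec_in :: "'op recd set \<Rightarrow> 'op \<Rightarrow> 'op \<Rightarrow> bool" where
  "prec_in recs op op' = (\<exists>ts ts'. (ts, op) \<in> recs \<and> (ts', op') \<in> recs \<and> ts_prec ts ts')"

datatype ('op, 'r) lstate =
    Idle
  | Reading 'op "'op recd list list"      \<comment> \<open>op being applied, G_1..G_m read so far\<close>
  | Appending 'op tstamp 'r               \<comment> \<open>valid: next step is L_i.append(ts,op)\<close>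

record ('op, 'r) config =
  ledger :: "nat \<Rightarrow> 'op recd list"
  loc    :: "nat \<Rightarrow> ('op, 'r) lstate"

definition after_read ::
  "nat \<Rightarrow> (('op set \<times> ('op \<Rightarrow> 'op \<Rightarrow> bool)) \<Rightarrow> 'op \<Rightarrow> nat \<Rightarrow> bool)
       \<Rightarrow> (('op set \<times> ('op \<Rightarrow> 'op \<Rightarrow> bool)) \<Rightarrow> 'op \<Rightarrow> nat \<Rightarrow> 'r)
       \<Rightarrow> nat \<Rightarrow> 'op \<Rightarrow> 'op recd list list \<Rightarrow> ('op, 'r) lstate" where
  "after_read n valid execute i op Gs =
     (if length Gs < n then Reading op Gs
      else (let ts = (i, map length Gs);
                recs = set (concat Gs);
                P = snd ` recs
            in if valid (P, prec_in recs) op i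
               then Appending op ts (execute (P, prec_in recs) op i)
               else Idle))"

text \<open>One atomic step of process i.  From Idle, the process invokes apply(op,i) for an
  arbitrary op, performing L_1.get(); then L_2.get(), ..., L_n.get(); then (if valid)
  L_i.append(ts,op).\<close>
definition pstep ::
  "nat \<Rightarrow> (('op set \<times> ('op \<Rightarrow> 'op \<Rightarrow> bool)) \<Rightarrow> 'op \<Rightarrow> nat \<Rightarrow> bool)
       \<Rightarrow> (('op set \<times> ('op \<Rightarrow> 'op \<Rightarrow> bool)) \<Rightarrow> 'op \<Rightarrow> nat \<Rightarrow> 'r)
       \<Rightarrow> nat \<Rightarrow> ('op, 'r) config \<Rightarrow> ('op, 'r) config \<Rightarrow> bool" where
  "pstep n valid execute i c c' =
     (case loc c i of
        Idle \<Rightarrow> (\<exists>op. c' = c\<lparr>loc := (loc c)(i := after_read n valid execute i op [ledger c 1])\<rparr>)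
      | Reading op Gs \<Rightarrow>
          c' = c\<lparr>loc := (loc c)(i := after_read n valid execute i op (Gs @ [ledger c (length Gs + 1)]))\<rparr>
      | Appending op ts r \<Rightarrow>
          c' = c\<lparr>ledger := (ledger c)(i := ledger c i @ [(ts, op)]), loc := (loc c)(i := Idle)\<rparr>)"

text \<open>A run: configurations cfg t and a schedule who t (None = no step).\<close>
definition is_run ::
  "nat \<Rightarrow> (('op set \<times> ('op \<Rightarrow> 'op \<Rightarrow> bool)) \<Rightarrow> 'op \<Rightarrow> nat \<Rightarrow> bool)
       \<Rightarrow> (('op set \<times> ('op \<Rightarrow> 'op \<Rightarrow> bool)) \<Rightarrow> 'op \<Rightarrow> nat \<Rightarrow> 'r)
       \<Rightarrow> (nat \<Rightarrow> ('op, 'r) config) \<Rightarrow> (nat \<Rightarrow> nat option) \<Rightarrow> bool" where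
  "is_run n valid execute cfg who =
     (1 \<le> n \<and>
      (\<forall>j. ledger (cfg 0) j = []) \<and> (\<forall>i. loc (cfg 0) i = Idle) \<and>
      (\<forall>t. case who t of
             None \<Rightarrow> cfg (Suc t) = cfg t
           | Some i \<Rightarrow> i \<in> {1..n} \<and> pstep n valid execute i (cfg t) (cfg (Suc t))))"

text \<open>A complete valid operation of the run, identified by its process i, the step s
  of its invocation (the L_1.get()) and the step e of its response (completion of
  L_i.append).  C(R) is the set of these triples.\<close>
definition complete_ops ::
  "(nat \<Rightarrow> ('op, 'r) config) \<Rightarrow> (nat \<Rightarrow> nat option) \<Rightarrow> (nat \<times> nat \<times> nat) set" where
  "complete_ops cfg who =
     {(i, s, e). s < e \<and>
        who s = Some i \<and> loc (cfg s) i = Idle \<and>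
        who e = Some i \<and> (\<exists>op ts r. loc (cfg e) i = Appending op ts r) \<and>
        (\<forall>t. s < t \<and> t < e \<longrightarrow> \<not> (who t = Some i \<and> loc (cfg t) i = Idle))}"

definition ts_of :: "(nat \<Rightarrow> ('op, 'r) config) \<Rightarrow> nat \<times> nat \<times> nat \<Rightarrow> tstamp" where
  "ts_of cfg o1 = (case o1 of (i, s, e) \<Rightarrow>
      (case loc (cfg e) i of Appending op ts r \<Rightarrow> ts | _ \<Rightarrow> undefined))"

definition real_time_before :: "nat \<times> nat \<times> nat \<Rightarrow> nat \<times> nat \<times> nat \<Rightarrow> bool" where
  "real_time_before o1 o2 = (snd (snd o1) < fst (snd o2))"

definition op_prec :: "(nat \<Rightarrow> ('op, 'r) config) \<Rightarrow> nat \<times> nat \<times> nat \<Rightarrow> nat \<times> nat \<times> nat \<Rightarrow> bool" where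
  "op_prec cfg o1 o2 = ts_prec (ts_of cfg o1) (ts_of cfg o2)"

end

theory Submission
  imports Defs
begin

text \<open>The timestamp of a complete operation of process i records in its i-th entry the
  length of L_i just before its own append, so afterwards L_i is strictly longer. Ledgers
  only grow, and every later operation reads each L_j after its invocation, hence records
  at least as large an entry: the i-th entry strictly increases along real time.\<close>

lemma run_transition:
  assumes "is_run n valid execute cfg who"
  shows "case who t of None \<Rightarrow> cfg (Suc t) = cfg t
           | Some i \<Rightarrow> i \<in> {1..n} \<and> pstep n valid execute i (cfg t) (cfg (Suc t))"
  using assms unfolding is_run_def by blast

lemma run_pstep:
  assumes "is_run n valid execute cfg who" "who t = Some i"
  shows "i \<in> {1..n}" "pstep n valid execute i (cfg t) (cfg (Suc t))"
  using run_transition[OF assms(1), of t] assms(2) by simp_all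

lemma run_other_unchanged:
  assumes "is_run n valid execute cfg who" "who t \<noteq> Some j"
  shows "loc (cfg (Suc t)) j = loc (cfg t) j" "ledger (cfg (Suc t)) j = ledger (cfg t) j"
proof -
  have "loc (cfg (Suc t)) j = loc (cfg t) j \<and> ledger (cfg (Suc t)) j = ledger (cfg t) j"
  proof (cases "who t")
    case None
    then show ?thesis using run_transition[OF assms(1), of t] by simp
  next
    case (Some i)
    with assms(2) have "i \<noteq> j" by auto
    with run_pstep(2)[OF assms(1) Some] show ?thesis
      unfolding pstep_def by (auto split: lstate.splits)
  qed
  then show "loc (cfg (Suc t)) j = loc (cfg t) j" "ledger (cfg (Suc t)) j = ledger (cfg t) j"
    by simp_all
qed

lemma ledger_length_mono:
  assumes run: "is_run n valid execute cfg who" and "t \<le> t'"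
  shows "length (ledger (cfg t) j) \<le> length (ledger (cfg t') j)"
  using \<open>t \<le> t'\<close>
proof (induction t' rule: dec_induct)
  case base
  then show ?case by simp
next
  case (step m)
  have "length (ledger (cfg m) j) \<le> length (ledger (cfg (Suc m)) j)"
  proof (cases "who m = Some j")
    case True
    with run_pstep(2)[OF run True] show ?thesis
      unfolding pstep_def by (auto split: lstate.splits)
  next
    case False
    then show ?thesis using run_other_unchanged[OF run False] by simp
  qed
  with step.IH show ?case by simp
qed

definition own_entry_inv :: "nat \<Rightarrow> ('op, 'r) config \<Rightarrow> nat \<Rightarrow> bool" where
  "own_entry_inv n c k = (case loc c k of
       Idle \<Rightarrow> True
     | Reading op Gs \<Rightarrow> length Gs < n \<and> (k \<le> length Gs \<longrightarrow> Gs ! (k - 1) = ledger c k)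
     | Appending op ts r \<Rightarrow>
         fst ts = k \<and> length (snd ts) = n \<and> snd ts ! (k - 1) = length (ledger c k))"

lemma own_entry_inv_after_read:
  assumes "length Gs \<le> n" "k \<in> {1..n}" "k \<le> length Gs \<longrightarrow> Gs ! (k - 1) = ledger c k"
  shows "own_entry_inv n (c\<lparr>loc := (loc c)(k := after_read n valid execute k op Gs)\<rparr>) k"
  using assms unfolding own_entry_inv_def after_read_def Let_def by auto

lemma own_entry_inv_step:
  assumes run: "is_run n valid execute cfg who" and inv: "own_entry_inv n (cfg t) k"
  shows "own_entry_inv n (cfg (Suc t)) k"
proof (cases "who t = Some k")
  case False
  then show ?thesis
    using inv run_other_unchanged[OF run False] unfolding own_entry_inv_def by (simp only:)
next
  case True
  note k = run_pstep(1)[OF run True] and step = run_pstep(2)[OF run True]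
  show ?thesis
  proof (cases "loc (cfg t) k")
    case Idle
    with step obtain op where "cfg (Suc t) =
        (cfg t)\<lparr>loc := (loc (cfg t))(k := after_read n valid execute k op [ledger (cfg t) 1])\<rparr>"
      unfolding pstep_def by auto
    moreover have "k \<le> 1 \<longrightarrow> [ledger (cfg t) 1] ! (k - 1) = ledger (cfg t) k"
      using k by auto
    ultimately show ?thesis using k by (simp add: own_entry_inv_after_read)
  next
    case (Reading op Gs)
    let ?Gs = "Gs @ [ledger (cfg t) (length Gs + 1)]"
    from step Reading have "cfg (Suc t) =
        (cfg t)\<lparr>loc := (loc (cfg t))(k := after_read n valid execute k op ?Gs)\<rparr>"
      unfolding pstep_def by auto
    moreover from inv Reading
    have "length Gs < n" "k \<le> length Gs \<longrightarrow> Gs ! (k - 1) = ledger (cfg t) k"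
      unfolding own_entry_inv_def by auto
    moreover have "k \<le> length ?Gs \<longrightarrow> ?Gs ! (k - 1) = ledger (cfg t) k"
      using k calculation(3) by (auto simp: nth_append le_Suc_eq)
    ultimately show ?thesis using k by (simp add: own_entry_inv_after_read)
  next
    case (Appending op ts r)
    with step show ?thesis unfolding pstep_def own_entry_inv_def by auto
  qed
qed

lemma own_entry_inv_holds:
  assumes run: "is_run n valid execute cfg who"
  shows "own_entry_inv n (cfg t) k"
proof (induction t)
  case 0
  then show ?case using run unfolding is_run_def own_entry_inv_def by simp
next
  case (Suc t)
  then show ?case by (rule own_entry_inv_step[OF run])
qed

definition reads_at_least :: "(nat \<Rightarrow> nat) \<Rightarrow> ('op, 'r) config \<Rightarrow> nat \<Rightarrow> bool" where
  "reads_at_least f c k = (case loc c k of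
       Idle \<Rightarrow> True
     | Reading op Gs \<Rightarrow> (\<forall>j < length Gs. f j \<le> length (Gs ! j))
     | Appending op ts r \<Rightarrow> (\<forall>j < length (snd ts). f j \<le> snd ts ! j))"

lemma reads_at_least_after_read:
  assumes "\<forall>j < length Gs. f j \<le> length (Gs ! j)"
  shows "reads_at_least f (c\<lparr>loc := (loc c)(k := after_read n valid execute k op Gs)\<rparr>) k"
  using assms unfolding reads_at_least_def after_read_def Let_def by auto

lemma reads_at_least_invocation:
  assumes run: "is_run n valid execute cfg who"
    and "who s = Some k" "loc (cfg s) k = Idle"
  shows "reads_at_least (\<lambda>j. length (ledger (cfg s) (Suc j))) (cfg (Suc s)) k"
proof -
  from run_pstep(2)[OF run \<open>who s = Some k\<close>] \<open>loc (cfg s) k = Idle\<close>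
  obtain op where "cfg (Suc s) =
      (cfg s)\<lparr>loc := (loc (cfg s))(k := after_read n valid execute k op [ledger (cfg s) 1])\<rparr>"
    unfolding pstep_def by auto
  then show ?thesis by (simp add: reads_at_least_after_read)
qed

text \<open>The bound must hold for the ledgers at every step, since the next ledger read may
  happen at any of them; ledger monotonicity provides this after the invocation.\<close>

lemma reads_at_least_step:
  assumes run: "is_run n valid execute cfg who"
    and inv: "reads_at_least f (cfg t) k"
    and busy: "who t = Some k \<longrightarrow> loc (cfg t) k \<noteq> Idle"
    and bound: "\<forall>j. f j \<le> length (ledger (cfg t) (Suc j))"
  shows "reads_at_least f (cfg (Suc t)) k"
proof (cases "who t = Some k")
  case False
  then show ?thesis
    using inv run_other_unchanged[OF run False] unfolding reads_at_least_def by simp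
next
  case True
  note step = run_pstep(2)[OF run True]
  show ?thesis
  proof (cases "loc (cfg t) k")
    case Idle
    with busy True show ?thesis by simp
  next
    case (Reading op Gs)
    let ?Gs = "Gs @ [ledger (cfg t) (length Gs + 1)]"
    from step Reading have "cfg (Suc t) =
        (cfg t)\<lparr>loc := (loc (cfg t))(k := after_read n valid execute k op ?Gs)\<rparr>"
      unfolding pstep_def by auto
    moreover from inv Reading have "\<forall>j < length Gs. f j \<le> length (Gs ! j)"
      unfolding reads_at_least_def by simp
    then have "\<forall>j < length ?Gs. f j \<le> length (?Gs ! j)"
      using bound by (auto simp: nth_append less_Suc_eq)
    ultimately show ?thesis by (simp add: reads_at_least_after_read)
  next
    case (Appending op ts r)
    with step show ?thesis unfolding pstep_def reads_at_least_def by auto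
  qed
qed

lemma reads_at_least_until_response:
  assumes run: "is_run n valid execute cfg who"
    and start: "who s = Some k" "loc (cfg s) k = Idle" and "s < t"
    and busy: "\<forall>t'. s < t' \<and> t' < t \<longrightarrow> \<not> (who t' = Some k \<and> loc (cfg t') k = Idle)"
  shows "reads_at_least (\<lambda>j. length (ledger (cfg s) (Suc j))) (cfg t) k"
proof -
  have "Suc s \<le> t" using \<open>s < t\<close> by simp
  then show ?thesis using busy
  proof (induction t rule: dec_induct)
    case base
    show ?case using reads_at_least_invocation[OF run start] .
  next
    case (step m)
    show ?case
    proof (rule reads_at_least_step[OF run])
      show "reads_at_least (\<lambda>j. length (ledger (cfg s) (Suc j))) (cfg m) k"
        using step by simp
      show "who m = Some k \<longrightarrow> loc (cfg m) k \<noteq> Idle"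
        using step by auto
      show "\<forall>j. length (ledger (cfg s) (Suc j)) \<le> length (ledger (cfg m) (Suc j))"
        using ledger_length_mono[OF run] step.hyps by simp
    qed
  qed
qed

lemma complete_op_timestamp:
  assumes run: "is_run n valid execute cfg who" and op: "(i, s, e) \<in> complete_ops cfg who"
  obtains T where "ts_of cfg (i, s, e) = (i, T)" "i \<in> {1..n}"
    "length (ledger (cfg (Suc e)) i) = Suc (T ! (i - 1))"
    "\<forall>j < n. length (ledger (cfg s) (Suc j)) \<le> T ! j"
proof -
  from op have "who s = Some i" "loc (cfg s) i = Idle" "s < e" "who e = Some i"
    "\<forall>t. s < t \<and> t < e \<longrightarrow> \<not> (who t = Some i \<and> loc (cfg t) i = Idle)"
    unfolding complete_ops_def by auto
  moreover from op obtain op ts r where app: "loc (cfg e) i = Appending op ts r"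
    unfolding complete_ops_def by auto
  ultimately have reads: "reads_at_least (\<lambda>j. length (ledger (cfg s) (Suc j))) (cfg e) i"
    using reads_at_least_until_response[OF run] by blast
  from own_entry_inv_holds[OF run, of e i] app obtain T where
    ts: "ts = (i, T)" "length T = n" "T ! (i - 1) = length (ledger (cfg e) i)"
    unfolding own_entry_inv_def by (cases ts) auto
  show thesis
  proof
    show "ts_of cfg (i, s, e) = (i, T)" using app ts by (simp add: ts_of_def)
    show "i \<in> {1..n}" using run_pstep(1)[OF run \<open>who e = Some i\<close>] .
    show "length (ledger (cfg (Suc e)) i) = Suc (T ! (i - 1))"
      using run_pstep(2)[OF run \<open>who e = Some i\<close>] app ts unfolding pstep_def by auto
    show "\<forall>j < n. length (ledger (cfg s) (Suc j)) \<le> T ! j"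
      using reads app ts unfolding reads_at_least_def by simp
  qed
qed

theorem mainTheorem2:
  fixes n :: nat
    and valid :: "('op set \<times> ('op \<Rightarrow> 'op \<Rightarrow> bool)) \<Rightarrow> 'op \<Rightarrow> nat \<Rightarrow> bool"
    and execute :: "('op set \<times> ('op \<Rightarrow> 'op \<Rightarrow> bool)) \<Rightarrow> 'op \<Rightarrow> nat \<Rightarrow> 'r"
    and cfg :: "nat \<Rightarrow> ('op, 'r) config"
    and who :: "nat \<Rightarrow> nat option"
  assumes "is_run n valid execute cfg who"
  shows "\<forall>o1 \<in> complete_ops cfg who. \<forall>o2 \<in> complete_ops cfg who.
           real_time_before o1 o2 \<longrightarrow> op_prec cfg o1 o2"
proof (clarify)
  fix i s e k s' e'
  assume o1: "(i, s, e) \<in> complete_ops cfg who" and o2: "(k, s', e') \<in> complete_ops cfg who"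
    and "real_time_before (i, s, e) (k, s', e')"
  then have "e < s'" by (simp add: real_time_before_def)
  obtain T where T: "ts_of cfg (i, s, e) = (i, T)" "i \<in> {1..n}"
      "length (ledger (cfg (Suc e)) i) = Suc (T ! (i - 1))"
    using complete_op_timestamp[OF assms o1] by blast
  obtain T' where T': "ts_of cfg (k, s', e') = (k, T')"
      "\<forall>j < n. length (ledger (cfg s') (Suc j)) \<le> T' ! j"
    using complete_op_timestamp[OF assms o2] by blast
  have "T ! (i - 1) < length (ledger (cfg (Suc e)) i)" using T(3) by simp
  also have "\<dots> \<le> length (ledger (cfg s') i)"
    using ledger_length_mono[OF assms] \<open>e < s'\<close> by simp
  also have "\<dots> \<le> T' ! (i - 1)" using T'(2) T(2) by (auto dest: spec[of _ "i - 1"])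
  finally show "op_prec cfg (i, s, e) (k, s', e')"
    using T(1) T'(1) by (simp add: op_prec_def comp_def)
qed

end
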